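(* Let $\mu$ be a classification problem and $f:\mathcal X\times\mathcal A\to\Delta_k$ a deterministic calibrated predictor with $r_a:=f\sharp(\mu^X_a\times\{a\})$, and let $q^*\in\arg\min_{q\in\mathcal Q_k}\sum_aW_1(r_a,q)$, $\mathrm{Err}^*_f:=\frac12\sum_aW_1(r_a,q^* )$. Let $\rho$ be an absolutely continuous probability distribution on $\mathbb R^k$ with finite first moment, and let $u$ be the randomized map $u(s)=s+N$, $N\sim\rho$ independent. Let $\tilde r_a:=u\sharp r_a$ (the law of $S+N$, $S\sim r_a$), and let $T_a:\mathbb R^k\to\mathcal Y$ be the randomized function induced by an optimal coupling in $\Gamma(\tilde r_a,q^* )$ for the cost $\|s-y\|_1$ (kernel = regular conditional distribution of the coupling given the first coordinate). Define $\bar h_\rho(x,a)=T_a(u(f(x,a)))$. Then $$0\le\sum_{a\in[m]}\mathrm{Err}_a(\bar h_\rho)-\mathrm{Err}^*_f\le m\cdot\mathbb E_{N\sim\rho}[\|N\|_1].$$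
   Context: Setup. $\mathcal X$ is a standard Borel space, $k\ge 2$, $\mathcal Y=\{e_1,\dots,e_k\}\subset\mathbb R^k$ the standard basis vectors, $\mathcal A=[m]$. A classification problem is a probability distribution $\mu$ of $(X,Y,A)$ on $\mathcal X\times\mathcal Y\times\mathcal A$ with $\mathbb P(A=a)>0$ for all $a$; $\mu^X_a$ is the law of $X$ given $A=a$. $\Delta_k=\{x\in\mathbb R^k:x\ge0,\sum_ix_i=1\}$. For a deterministic predictor $f$, $f\sharp(\mu^X_a\times\{a\})$ is the law of $f(X,a)$, $X\sim\mu^X_a$. $f$ is calibrated if for every $a$ and $i$, $\mathbb P_\mu(Y=e_i\mid f(X,A)=s,A=a)=s_i$ for $r_a$-a.e. $s$. Randomized functions are given by Markov kernels, with randomness independent of $(X,Y,A)$; the push-forward of $p$ by a randomized map with kernel $K$ is $B\mapsto\int K(s,B)dp(s)$. $\mathrm{Err}_a(h)=\mathbb P(h(X,a)\ne Y\mid A=a)$. $\mathcal Q_k$ is the set of distributions supported on $\mathcal Y$, $\Gamma(p,q)$ the couplings, $W_1(p,q)=\inf_{\gamma\in\Gamma(p,q)}\int\|s-s'\|_1d\gamma$. *)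

theory Defs
  imports "HOL-Probability.Probability"
begin

definition Ycal :: "(real^'k) set" where
  "Ycal = {axis i 1 | i. True}"

definition prob_simplex :: "(real^'k) set" where
  "prob_simplex = {s. (\<forall>i. 0 \<le> s $ i) \<and> (\<Sum>i\<in>UNIV. s $ i) = 1}"

definition l1 :: "real^'k \<Rightarrow> real" where
  "l1 v = (\<Sum>i\<in>UNIV. \<bar>v $ i\<bar>)"

text \<open>A classification problem: a probability distribution mu of (X,Y,A) on
  X x Y x [m], with the product sigma algebra; components of z are
  X = fst z, Y = fst (snd z), A = snd (snd z).\<close>
definition classification_problem ::
  "nat \<Rightarrow> ('x::polish_space \<times> (real^'k) \<times> nat) measure \<Rightarrow> bool" where
  "classification_problem m \<mu> \<longleftrightarrow>
     prob_space \<mu> \<and>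
     sets \<mu> = sets (borel \<Otimes>\<^sub>M (borel \<Otimes>\<^sub>M count_space UNIV)) \<and>
     (AE z in \<mu>. fst (snd z) \<in> Ycal \<and> snd (snd z) \<in> {1..m}) \<and>
     (\<forall>a\<in>{1..m}. measure \<mu> {z \<in> space \<mu>. snd (snd z) = a} > 0)"

definition probA :: "('x \<times> (real^'k) \<times> nat) measure \<Rightarrow> nat \<Rightarrow> real" where
  "probA \<mu> a = measure \<mu> {z \<in> space \<mu>. snd (snd z) = a}"

definition muX :: "('x::polish_space \<times> (real^'k) \<times> nat) measure \<Rightarrow> nat \<Rightarrow> 'x measure" where
  "muX \<mu> a = scale_measure (1 / ennreal (probA \<mu> a))
      (distr (density \<mu> (indicator {z. snd (snd z) = a})) borel fst)"

definition pushf :: "('x::polish_space \<times> (real^'k) \<times> nat) measure \<Rightarrow> ('x \<Rightarrow> nat \<Rightarrow> real^'k)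
     \<Rightarrow> nat \<Rightarrow> (real^'k) measure" where
  "pushf \<mu> f a = distr (muX \<mu> a) borel (\<lambda>x. f x a)"

definition det_predictor :: "('x::polish_space \<Rightarrow> nat \<Rightarrow> real^'k) \<Rightarrow> bool" where
  "det_predictor f \<longleftrightarrow> (\<forall>a. (\<lambda>x. f x a) \<in> borel_measurable borel) \<and> (\<forall>x a. f x a \<in> prob_simplex)"

text \<open>Calibration: for every a and i, P(Y = e_i | f(X,A) = s, A = a) = s_i for r_a-a.e. s,
  expressed through the defining property of conditional probability:
  P(Y = e_i, f(X,a) \<in> B, A = a) = P(A = a) * \<integral>_B s_i dr_a(s) for every Borel B.\<close>
definition calibrated :: "nat \<Rightarrow> ('x::polish_space \<times> (real^'k) \<times> nat) measure
     \<Rightarrow> ('x \<Rightarrow> nat \<Rightarrow> real^'k) \<Rightarrow> bool" where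
  "calibrated m \<mu> f \<longleftrightarrow>
     (\<forall>a\<in>{1..m}. \<forall>i. \<forall>B\<in>sets borel.
        measure \<mu> {z \<in> space \<mu>. fst (snd z) = axis i 1 \<and> f (fst z) a \<in> B \<and> snd (snd z) = a}
        = probA \<mu> a * (LINT s:B|pushf \<mu> f a. s $ i))"

text \<open>Push-forward of a distribution p by a randomized map with Markov kernel K:
  B \<mapsto> \<integral> K(s,B) dp(s).\<close>
definition push_kernel :: "'a measure \<Rightarrow> ('a \<Rightarrow> 'b measure) \<Rightarrow> 'b measure" where
  "push_kernel p K = p \<bind> K"

definition noise_kernel :: "(real^'k) measure \<Rightarrow> real^'k \<Rightarrow> (real^'k) measure" where
  "noise_kernel \<rho> s = distr \<rho> borel (\<lambda>n. s + n)"

text \<open>Error of a randomized predictor with output kernel H (H x a = law of h(x,a)),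
  randomness independent of (X,Y,A): P(h(X,a) \<noteq> Y | A = a).\<close>
definition Err :: "('x \<times> (real^'k) \<times> nat) measure \<Rightarrow> ('x \<Rightarrow> nat \<Rightarrow> (real^'k) measure)
     \<Rightarrow> nat \<Rightarrow> real" where
  "Err \<mu> H a = (\<integral>z. indicator {z. snd (snd z) = a} z
                    * measure (H (fst z) a) (UNIV - {fst (snd z)}) \<partial>\<mu>) / probA \<mu> a"

definition Qk :: "(real^'k) measure set" where
  "Qk = {q. prob_space q \<and> sets q = sets borel \<and> emeasure q Ycal = 1}"

definition couplings :: "(real^'k) measure \<Rightarrow> (real^'k) measure \<Rightarrow> ((real^'k) \<times> (real^'k)) measure set" where
  "couplings p q = {\<gamma>. prob_space \<gamma> \<and> sets \<gamma> = sets (borel \<Otimes>\<^sub>M borel) \<and>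
                        distr \<gamma> borel fst = p \<and> distr \<gamma> borel snd = q}"

definition transport_cost :: "((real^'k) \<times> (real^'k)) measure \<Rightarrow> ennreal" where
  "transport_cost \<gamma> = (\<integral>\<^sup>+ z. ennreal (l1 (fst z - snd z)) \<partial>\<gamma>)"

text \<open>W_1 with l1 cost (as extended nonnegative value, and its real value; all W_1
  values occurring in the statement are finite).\<close>
definition W1e :: "(real^'k) measure \<Rightarrow> (real^'k) measure \<Rightarrow> ennreal" where
  "W1e p q = (INF \<gamma>\<in>couplings p q. transport_cost \<gamma>)"

definition W1 :: "(real^'k) measure \<Rightarrow> (real^'k) measure \<Rightarrow> real" where
  "W1 p q = enn2real (W1e p q)"

definition rcd_first :: "((real^'k) \<times> (real^'k)) measure \<Rightarrow> (real^'k) measure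
     \<Rightarrow> (real^'k \<Rightarrow> (real^'k) measure) \<Rightarrow> bool" where
  "rcd_first \<gamma> p K \<longleftrightarrow>
     K \<in> borel \<rightarrow>\<^sub>M prob_algebra borel \<and>
     (\<forall>A\<in>sets borel. \<forall>B\<in>sets borel.
        emeasure \<gamma> (A \<times> B) = (\<integral>\<^sup>+ s. indicator A s * emeasure (K s) B \<partial>p))"

end

theory Submission
  imports Defs
begin

text \<open>Fix a group \<open>a\<close>, let \<open>r\<close> be its score law and let \<open>H(s)\<close> be the law of \<open>T\<^sub>a(s + N)\<close>.
  The optimal coupling pushes the noisy scores onto \<open>q*\<close>, so \<open>H\<close> pushes \<open>r\<close> onto \<open>q*\<close> and
  \<open>(S, H(S))\<close> is a coupling of \<open>r\<close> and \<open>q*\<close>; its cost \<open>C\<close> is therefore at least \<open>W\<^sub>1(r, q*)\<close>.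
  Conversely, the triangle inequality through the noisy score \<open>S + N\<close> gives
  \<open>C \<le> E|N| + W\<^sub>1(r \<star> \<rho>, q*) \<le> W\<^sub>1(r, q*) + 2 E|N|\<close>, because shifting the first marginal of any
  coupling by \<open>N\<close> costs at most \<open>E|N|\<close>. For a score \<open>s\<close> in the simplex and a label \<open>e\<^sub>i\<close> one has
  \<open>|s - e\<^sub>i|\<^sub>1 = 2 (1 - s\<^sub>i)\<close>, and by calibration the label is \<open>e\<^sub>i\<close> with probability \<open>s\<^sub>i\<close>, so
  \<open>C = 2 Err\<^sub>a\<close>.\<close>

lemma l1_measurable[measurable]: "l1 \<in> borel_measurable (borel :: (real^'k) measure)"
  unfolding l1_def by measurable

lemma l1_nonneg: "0 \<le> l1 v"
  unfolding l1_def by (simp add: sum_nonneg)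

lemma l1_add_le: "l1 (a + b) \<le> l1 a + l1 (b::real^'k)"
  unfolding l1_def by (simp add: sum.distrib[symmetric] sum_mono abs_triangle_ineq)

lemma l1_diff_triangle: "l1 (a - c) \<le> l1 (a - b) + l1 (b - (c::real^'k))"
  using l1_add_le[of "a - b" "b - c"] by simp

section \<open>Markov kernels\<close>

lemma prob_kernel_prob_space:
  assumes "K \<in> (borel :: 'a::topological_space measure) \<rightarrow>\<^sub>M prob_algebra N"
  shows "prob_space (K x)"
  using measurable_space[OF assms, of x] by (simp add: space_prob_algebra)

lemma prob_kernel_sets:
  assumes "K \<in> (borel :: 'a::topological_space measure) \<rightarrow>\<^sub>M prob_algebra N"
  shows "sets (K x) = sets N"
  using measurable_space[OF assms, of x] by (simp add: space_prob_algebra)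

lemma prob_space_bind_prob_kernel:
  assumes p: "prob_space p" "sets p = sets borel"
    and K: "K \<in> (borel :: 'a::topological_space measure) \<rightarrow>\<^sub>M prob_algebra N"
  shows "prob_space (p \<bind> K)" "sets (p \<bind> K) = sets N"
proof -
  have "p \<in> space (prob_algebra borel)"
    using p by (simp add: space_prob_algebra)
  then show "prob_space (p \<bind> K)" "sets (p \<bind> K) = sets N"
    using prob_space_bind' sets_bind' K by blast+
qed

lemma nn_integral_const_add_prob:
  assumes "prob_space M" and g: "g \<in> borel_measurable M"
  shows "(\<integral>\<^sup>+x. c + g x \<partial>M) = c + integral\<^sup>N M g"
proof -
  have "(\<integral>\<^sup>+x. c + g x \<partial>M) = (\<integral>\<^sup>+x. c \<partial>M) + integral\<^sup>N M g"
    by (rule nn_integral_add) (use g in auto)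
  then show ?thesis
    using assms(1) by (simp add: prob_space.emeasure_space_1)
qed

lemma ennreal_le_INF_add:
  assumes "\<And>x. x \<in> I \<Longrightarrow> (a::ennreal) \<le> g x + c"
  shows "a \<le> (INF x\<in>I. g x) + c"
proof (cases "c = top")
  case False
  have "a - c \<le> (INF x\<in>I. g x)"
    using assms False by (intro INF_greatest) (simp add: ennreal_minus_le_iff add.commute)
  then show ?thesis
    by (simp add: ennreal_minus_le_iff add.commute)
qed simp

lemma AE_eq_1_if_nn_integral_eq_1:
  assumes "prob_space M" and g: "g \<in> borel_measurable M" and le: "\<And>x. g x \<le> 1"
    and int: "(\<integral>\<^sup>+x. g x \<partial>M) = 1"
  shows "AE x in M. g x = 1"
proof -
  interpret prob_space M by fact
  have "(\<integral>\<^sup>+x. 1 - g x \<partial>M) = (\<integral>\<^sup>+x. 1 \<partial>M) - (\<integral>\<^sup>+x. g x \<partial>M)"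
    by (rule nn_integral_diff) (use g le int in auto)
  also have "\<dots> = 0"
    using int by (simp add: emeasure_space_1)
  finally have "AE x in M. 1 - g x = 0"
    by (subst nn_integral_0_iff_AE[symmetric]) (use g in auto)
  then show ?thesis
    by eventually_elim (use le in \<open>metis antisym ennreal_minus_eq_0\<close>)
qed

lemma AE_kernel_emeasure_eq_1:
  assumes p: "prob_space p" "sets p = sets borel"
    and K: "K \<in> (borel :: 'a::topological_space measure) \<rightarrow>\<^sub>M prob_algebra N"
    and A: "A \<in> sets N" and bind: "emeasure (p \<bind> K) A = 1"
  shows "AE t in p. emeasure (K t) A = 1"
proof (rule AE_eq_1_if_nn_integral_eq_1[OF p(1)])
  have Ks: "K \<in> p \<rightarrow>\<^sub>M subprob_algebra N"
    using measurable_prob_algebraD[OF K] measurable_cong_sets[OF p(2) refl] by blast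
  show "(\<lambda>t. emeasure (K t) A) \<in> borel_measurable p"
    using measurable_emeasure_kernel[OF Ks A] .
  show "emeasure (K t) A \<le> 1" for t
    using prob_space.emeasure_le_1[OF prob_kernel_prob_space[OF K]] .
  show "(\<integral>\<^sup>+t. emeasure (K t) A \<partial>p) = 1"
    using emeasure_bind[OF _ Ks A] prob_space.not_empty[OF p(1)] bind by simp
qed

section \<open>The coupling induced by a kernel\<close>

definition graph_coupling ::
    "'a::topological_space measure \<Rightarrow> ('a \<Rightarrow> 'b::topological_space measure) \<Rightarrow> ('a \<times> 'b) measure" where
  "graph_coupling p K = p \<bind> (\<lambda>t. distr (K t) (borel \<Otimes>\<^sub>M borel) (Pair t))"

lemma graph_kernel_measurable:
  assumes "K \<in> borel \<rightarrow>\<^sub>M subprob_algebra borel"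
  shows "(\<lambda>t. distr (K t) (borel \<Otimes>\<^sub>M borel) (Pair t))
           \<in> (borel :: 'a::topological_space measure) \<rightarrow>\<^sub>M subprob_algebra (borel \<Otimes>\<^sub>M (borel :: 'b::topological_space measure))"
  by (rule measurable_distr2[where M=borel]) (use assms in measurable)

lemma nn_integral_graph_coupling:
  assumes p: "sets p = sets borel" and K: "K \<in> borel \<rightarrow>\<^sub>M prob_algebra borel"
    and c: "c \<in> borel_measurable (borel \<Otimes>\<^sub>M borel)"
  shows "(\<integral>\<^sup>+z. c z \<partial>graph_coupling p K) = (\<integral>\<^sup>+t. \<integral>\<^sup>+y. c (t, y) \<partial>K t \<partial>p)"
proof -
  have Ks: "K \<in> borel \<rightarrow>\<^sub>M subprob_algebra borel"
    using measurable_prob_algebraD[OF K] .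
  have "(\<integral>\<^sup>+z. c z \<partial>graph_coupling p K)
      = (\<integral>\<^sup>+t. \<integral>\<^sup>+z. c z \<partial>distr (K t) (borel \<Otimes>\<^sub>M borel) (Pair t) \<partial>p)"
    unfolding graph_coupling_def
    using graph_kernel_measurable[OF Ks] measurable_cong_sets[OF p refl] c
    by (intro nn_integral_bind) auto
  also have "\<dots> = (\<integral>\<^sup>+t. \<integral>\<^sup>+y. c (t, y) \<partial>K t \<partial>p)"
    using c by (intro nn_integral_cong, subst nn_integral_distr)
      (simp_all add: measurable_cong_sets[OF prob_kernel_sets[OF K] refl])
  finally show ?thesis .
qed

lemma graph_coupling_couplings:
  fixes p :: "(real^'k) measure"
  assumes p: "prob_space p" "sets p = sets borel" and K: "K \<in> borel \<rightarrow>\<^sub>M prob_algebra borel"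
  shows "graph_coupling p K \<in> couplings p (p \<bind> K)"
proof -
  define L where "L = (\<lambda>t. distr (K t) (borel \<Otimes>\<^sub>M borel) (Pair t) :: ((real^'k) \<times> (real^'k)) measure)"
  have sK: "\<And>t. sets (K t) = sets borel"
    using prob_kernel_sets[OF K] .
  have Lsub: "L \<in> borel \<rightarrow>\<^sub>M subprob_algebra (borel \<Otimes>\<^sub>M borel)"
    unfolding L_def using graph_kernel_measurable[OF measurable_prob_algebraD[OF K]] .
  have Lprob: "L \<in> borel \<rightarrow>\<^sub>M prob_algebra (borel \<Otimes>\<^sub>M borel)"
    by (rule measurable_prob_algebraI[OF _ Lsub])
      (auto simp: L_def measurable_cong_sets[OF sK refl]
            intro!: prob_space.prob_space_distr prob_kernel_prob_space[OF K])
  have Lp: "L \<in> p \<rightarrow>\<^sub>M subprob_algebra (borel \<Otimes>\<^sub>M borel)"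
    using Lsub measurable_cong_sets[OF p(2) refl] by blast
  have ne: "space p \<noteq> {}"
    using prob_space.not_empty[OF p(1)] .
  have "distr (graph_coupling p K) borel fst = p \<bind> (\<lambda>t. distr (L t) borel fst)"
    unfolding graph_coupling_def L_def[symmetric] by (rule distr_bind[OF Lp ne]) simp
  also have "\<dots> = p \<bind> return borel"
    by (intro bind_cong refl, unfold L_def, subst distr_distr)
      (simp_all add: measurable_cong_sets[OF sK refl] comp_def
                     prob_space.distr_const[OF prob_kernel_prob_space[OF K]])
  also have "\<dots> = p"
    by (rule bind_return'') (simp add: p)
  finally have fst: "distr (graph_coupling p K) borel fst = p" .
  have "distr (graph_coupling p K) borel snd = p \<bind> (\<lambda>t. distr (L t) borel snd)"
    unfolding graph_coupling_def L_def[symmetric] by (rule distr_bind[OF Lp ne]) simp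
  also have "\<dots> = p \<bind> K"
    by (intro bind_cong refl, unfold L_def, subst distr_distr)
      (simp_all add: measurable_cong_sets[OF sK refl] comp_def distr_id2[OF sK[symmetric]])
  finally have snd: "distr (graph_coupling p K) borel snd = p \<bind> K" .
  show ?thesis
    unfolding couplings_def graph_coupling_def L_def[symmetric]
    using prob_space_bind_prob_kernel[OF p Lprob] fst snd by (simp add: graph_coupling_def L_def)
qed

lemma transport_cost_graph_coupling:
  fixes p :: "(real^'k) measure"
  assumes "sets p = sets borel" and "K \<in> borel \<rightarrow>\<^sub>M prob_algebra borel"
  shows "transport_cost (graph_coupling p K) = (\<integral>\<^sup>+t. \<integral>\<^sup>+y. ennreal (l1 (t - y)) \<partial>K t \<partial>p)"
  unfolding transport_cost_def
  using nn_integral_graph_coupling[OF assms, of "\<lambda>z. ennreal (l1 (fst z - snd z))"] by simp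

lemma W1e_bind_le_kernel_cost:
  fixes p :: "(real^'k) measure"
  assumes "prob_space p" "sets p = sets borel" and "K \<in> borel \<rightarrow>\<^sub>M prob_algebra borel"
  shows "W1e p (p \<bind> K) \<le> (\<integral>\<^sup>+t. \<integral>\<^sup>+y. ennreal (l1 (t - y)) \<partial>K t \<partial>p)"
  unfolding W1e_def transport_cost_graph_coupling[OF assms(2,3), symmetric]
  using graph_coupling_couplings[OF assms] by (rule INF_lower)

lemma rcd_first_eq_graph_coupling:
  fixes p :: "(real^'k) measure"
  assumes rcd: "rcd_first \<gamma> p K" and p: "prob_space p" "sets p = sets borel"
    and sg: "sets \<gamma> = sets (borel \<Otimes>\<^sub>M borel)"
  shows "\<gamma> = graph_coupling p K"
proof -
  have K: "K \<in> borel \<rightarrow>\<^sub>M prob_algebra borel"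
    and R: "\<And>A B. A \<in> sets borel \<Longrightarrow> B \<in> sets borel \<Longrightarrow>
        emeasure \<gamma> (A \<times> B) = (\<integral>\<^sup>+ s. indicator A s * emeasure (K s) B \<partial>p)"
    using rcd unfolding rcd_first_def by auto
  let ?E = "{A \<times> B | A B. A \<in> sets (borel::(real^'k) measure) \<and> B \<in> sets (borel::(real^'k) measure)}"
  have sG: "sets (graph_coupling p K) = sets (borel \<Otimes>\<^sub>M borel)"
    using graph_coupling_couplings[OF p K] by (simp add: couplings_def)
  show ?thesis
  proof (rule measure_eqI_generator_eq[where E="?E" and \<Omega>="UNIV" and A="\<lambda>_. UNIV"])
    show "Int_stable ?E"
      by (rule Int_stable_pair_measure_generator)
    show "sets \<gamma> = sigma_sets UNIV ?E" "sets (graph_coupling p K) = sigma_sets UNIV ?E"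
      using sg sG by (simp_all add: sets_pair_measure)
    have "emeasure (K t) UNIV = 1" for t
      using prob_space.emeasure_space_1[OF prob_kernel_prob_space[OF K, of t]]
        sets_eq_imp_space_eq[OF prob_kernel_sets[OF K, of t]] by simp
    then show "emeasure \<gamma> UNIV \<noteq> \<infinity>"
      using R[of UNIV UNIV] p(1) by (simp add: prob_space.emeasure_space_1)
    fix X assume "X \<in> ?E"
    then obtain A B where X: "X = A \<times> B" and A: "A \<in> sets borel" and B: "B \<in> sets borel"
      by auto
    have "emeasure (graph_coupling p K) X = (\<integral>\<^sup>+t. \<integral>\<^sup>+y. indicator X (t, y) \<partial>K t \<partial>p)"
      using nn_integral_graph_coupling[OF p(2) K, of "indicator X"] A B X sG
      by (simp add: nn_integral_indicator)
    also have "\<dots> = (\<integral>\<^sup>+t. indicator A t * emeasure (K t) B \<partial>p)"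
      using B by (intro nn_integral_cong)
        (auto simp: X indicator_times nn_integral_cmult_indicator prob_kernel_sets[OF K])
    finally show "emeasure \<gamma> X = emeasure (graph_coupling p K) X"
      using R[OF A B] X by simp
  qed (auto intro!: exI[of _ UNIV])
qed

section \<open>Adding noise to the scores\<close>

lemma noise_kernel_prob_algebra:
  assumes "prob_space \<rho>" "sets \<rho> = sets borel"
  shows "noise_kernel \<rho> \<in> (borel :: (real^'k) measure) \<rightarrow>\<^sub>M prob_algebra borel"
proof (rule measurable_prob_algebraI)
  show "prob_space (noise_kernel \<rho> x)" for x
    unfolding noise_kernel_def using assms by (intro prob_space.prob_space_distr) auto
  have [measurable]: "\<rho> \<in> space (subprob_algebra borel)"
    using assms by (simp add: space_subprob_algebra prob_space_imp_subprob_space)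
  show "noise_kernel \<rho> \<in> borel \<rightarrow>\<^sub>M subprob_algebra borel"
    unfolding noise_kernel_def by (rule measurable_distr2[where M=borel]) auto
qed

lemma nn_integral_noise_kernel:
  assumes "sets \<rho> = sets borel" and "g \<in> borel_measurable (borel :: (real^'k) measure)"
  shows "(\<integral>\<^sup>+t. g t \<partial>noise_kernel \<rho> s) = (\<integral>\<^sup>+n. g (s + n) \<partial>\<rho>)"
  unfolding noise_kernel_def using assms
  by (subst nn_integral_distr) (simp_all add: measurable_cong_sets[OF assms(1) refl])

definition perturb_coupling ::
    "(real^'k) measure \<Rightarrow> ((real^'k) \<times> (real^'k)) measure \<Rightarrow> ((real^'k) \<times> (real^'k)) measure" where
  "perturb_coupling \<rho> \<pi> = \<pi> \<bind> (\<lambda>w. distr \<rho> (borel \<Otimes>\<^sub>M borel) (\<lambda>n. (fst w + n, snd w)))"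

lemma perturb_coupling_couplings:
  fixes r q :: "(real^'k) measure"
  assumes rho: "prob_space \<rho>" "sets \<rho> = sets borel" and \<pi>: "\<pi> \<in> couplings r q"
  shows "perturb_coupling \<rho> \<pi> \<in> couplings (r \<bind> noise_kernel \<rho>) q"
proof -
  from \<pi> have p0: "prob_space \<pi>" and s0: "sets \<pi> = sets (borel \<Otimes>\<^sub>M borel)"
    and m1: "distr \<pi> borel fst = r" and m2: "distr \<pi> borel snd = q"
    unfolding couplings_def by auto
  define L where "L = (\<lambda>w::(real^'k) \<times> (real^'k). distr \<rho> (borel \<Otimes>\<^sub>M borel) (\<lambda>n. (fst w + n, snd w)))"
  have [measurable]: "\<rho> \<in> space (subprob_algebra borel)"
    using rho by (simp add: space_subprob_algebra prob_space_imp_subprob_space)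
  have Lsub: "L \<in> (borel \<Otimes>\<^sub>M borel) \<rightarrow>\<^sub>M subprob_algebra (borel \<Otimes>\<^sub>M borel)"
    unfolding L_def by (rule measurable_distr2[where M=borel]) auto
  have Lprob: "L \<in> (borel \<Otimes>\<^sub>M borel) \<rightarrow>\<^sub>M prob_algebra (borel \<Otimes>\<^sub>M borel)"
    by (rule measurable_prob_algebraI[OF _ Lsub])
      (use rho in \<open>auto simp: L_def intro!: prob_space.prob_space_distr\<close>)
  have Lsub0: "L \<in> \<pi> \<rightarrow>\<^sub>M subprob_algebra (borel \<Otimes>\<^sub>M borel)"
    using Lsub measurable_cong_sets[OF s0 refl] by blast
  have p0sp: "\<pi> \<in> space (prob_algebra (borel \<Otimes>\<^sub>M borel))"
    using p0 s0 by (simp add: space_prob_algebra)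
  have ne: "space \<pi> \<noteq> {}"
    using prob_space.not_empty[OF p0] .
  have distr_L: "distr (L w) borel h = distr \<rho> borel (\<lambda>n. h (fst w + n, snd w))"
    if "h \<in> (borel \<Otimes>\<^sub>M borel) \<rightarrow>\<^sub>M (borel :: (real^'k) measure)" for w h
    unfolding L_def using that
    by (subst distr_distr) (auto simp: measurable_cong_sets[OF rho(2) refl] comp_def)
  have fst0: "fst \<in> \<pi> \<rightarrow>\<^sub>M (borel :: (real^'k) measure)"
    by (subst measurable_cong_sets[OF s0 refl]) measurable
  have snd0: "snd \<in> \<pi> \<rightarrow>\<^sub>M (borel :: (real^'k) measure)"
    by (subst measurable_cong_sets[OF s0 refl]) measurable
  have "distr (perturb_coupling \<rho> \<pi>) borel fst = \<pi> \<bind> (\<lambda>w. noise_kernel \<rho> (fst w))"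
    unfolding perturb_coupling_def L_def[symmetric]
    by (subst distr_bind[OF Lsub0 ne]) (auto simp: distr_L[OF measurable_fst] noise_kernel_def intro!: bind_cong)
  also have "\<dots> = r \<bind> noise_kernel \<rho>"
    using bind_distr[OF fst0 measurable_prob_algebraD[OF noise_kernel_prob_algebra[OF rho]] ne] m1
    by simp
  finally have fst: "distr (perturb_coupling \<rho> \<pi>) borel fst = r \<bind> noise_kernel \<rho>" .
  have "distr (perturb_coupling \<rho> \<pi>) borel snd = \<pi> \<bind> (\<lambda>w. return borel (snd w))"
    unfolding perturb_coupling_def L_def[symmetric]
    by (subst distr_bind[OF Lsub0 ne]) (auto simp: distr_L[OF measurable_snd] prob_space.distr_const[OF rho(1)] intro!: bind_cong)
  also have "\<dots> = q"
    using bind_return_distr'[OF ne snd0] m2 by simp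
  finally have snd: "distr (perturb_coupling \<rho> \<pi>) borel snd = q" .
  show ?thesis
    unfolding couplings_def perturb_coupling_def L_def[symmetric]
    using prob_space_bind'[OF p0sp Lprob] sets_bind'[OF p0sp Lprob] fst snd
    by (simp add: perturb_coupling_def L_def)
qed

lemma transport_cost_perturb_coupling_le:
  fixes \<rho> :: "(real^'k) measure"
  assumes rho: "prob_space \<rho>" "sets \<rho> = sets borel"
    and \<pi>: "prob_space \<pi>" "sets \<pi> = sets (borel \<Otimes>\<^sub>M borel)"
  shows "transport_cost (perturb_coupling \<rho> \<pi>) \<le> transport_cost \<pi> + (\<integral>\<^sup>+n. ennreal (l1 n) \<partial>\<rho>)"
proof -
  define EN where "EN = (\<integral>\<^sup>+n. ennreal (l1 n) \<partial>\<rho>)"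
  have [measurable]: "\<rho> \<in> space (subprob_algebra borel)"
    using rho by (simp add: space_subprob_algebra prob_space_imp_subprob_space)
  have L: "(\<lambda>w. distr \<rho> (borel \<Otimes>\<^sub>M borel) (\<lambda>n. (fst w + n, snd w))) \<in> \<pi> \<rightarrow>\<^sub>M subprob_algebra (borel \<Otimes>\<^sub>M borel)"
    by (subst measurable_cong_sets[OF \<pi>(2) refl], rule measurable_distr2[where M=borel]) auto
  have "transport_cost (perturb_coupling \<rho> \<pi>) = (\<integral>\<^sup>+w. \<integral>\<^sup>+n. ennreal (l1 (fst w + n - snd w)) \<partial>\<rho> \<partial>\<pi>)"
    unfolding transport_cost_def perturb_coupling_def
    by (subst nn_integral_bind[OF _ L]) (auto simp: measurable_cong_sets[OF rho(2) refl] nn_integral_distr)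
  also have "\<dots> \<le> (\<integral>\<^sup>+w. EN + ennreal (l1 (fst w - snd w)) \<partial>\<pi>)"
  proof (rule nn_integral_mono)
    fix w :: "(real^'k) \<times> (real^'k)"
    have "(\<integral>\<^sup>+n. ennreal (l1 (fst w + n - snd w)) \<partial>\<rho>) \<le> (\<integral>\<^sup>+n. ennreal (l1 (fst w - snd w)) + ennreal (l1 n) \<partial>\<rho>)"
      using l1_add_le[of "fst w - snd w"]
      by (intro nn_integral_mono) (simp add: l1_nonneg algebra_simps flip: ennreal_plus)
    also have "\<dots> = ennreal (l1 (fst w - snd w)) + EN"
      unfolding EN_def by (rule nn_integral_const_add_prob[OF rho(1)]) (simp add: measurable_cong_sets[OF rho(2) refl])
    finally show "(\<integral>\<^sup>+n. ennreal (l1 (fst w + n - snd w)) \<partial>\<rho>) \<le> EN + ennreal (l1 (fst w - snd w))"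
      by (simp add: add.commute)
  qed
  also have "\<dots> = EN + transport_cost \<pi>"
    unfolding transport_cost_def
    by (rule nn_integral_const_add_prob[OF \<pi>(1)]) (simp add: measurable_cong_sets[OF \<pi>(2) refl])
  finally show ?thesis
    unfolding EN_def by (simp add: add.commute)
qed

lemma W1e_bind_noise_le:
  fixes r q :: "(real^'k) measure"
  assumes "prob_space \<rho>" "sets \<rho> = sets borel"
  shows "W1e (r \<bind> noise_kernel \<rho>) q \<le> W1e r q + (\<integral>\<^sup>+n. ennreal (l1 n) \<partial>\<rho>)"
  unfolding W1e_def[of r q]
proof (rule ennreal_le_INF_add)
  fix \<pi> assume \<pi>: "\<pi> \<in> couplings r q"
  then have "prob_space \<pi>" "sets \<pi> = sets (borel \<Otimes>\<^sub>M borel)"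
    unfolding couplings_def by auto
  then have "transport_cost (perturb_coupling \<rho> \<pi>) \<le> transport_cost \<pi> + (\<integral>\<^sup>+n. ennreal (l1 n) \<partial>\<rho>)"
    by (rule transport_cost_perturb_coupling_le[OF assms])
  moreover have "W1e (r \<bind> noise_kernel \<rho>) q \<le> transport_cost (perturb_coupling \<rho> \<pi>)"
    unfolding W1e_def using perturb_coupling_couplings[OF assms \<pi>] by (rule INF_lower)
  ultimately show "W1e (r \<bind> noise_kernel \<rho>) q \<le> transport_cost \<pi> + (\<integral>\<^sup>+n. ennreal (l1 n) \<partial>\<rho>)"
    by (rule order_trans[rotated])
qed

lemma nn_integral_l1_bind_le:
  fixes M :: "(real^'k) measure"
  assumes M: "sets M = sets borel" and K: "K \<in> borel \<rightarrow>\<^sub>M prob_algebra borel"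
  shows "(\<integral>\<^sup>+y. ennreal (l1 (s - y)) \<partial>(M \<bind> K))
           \<le> (\<integral>\<^sup>+t. ennreal (l1 (s - t)) \<partial>M) + (\<integral>\<^sup>+t. \<integral>\<^sup>+y. ennreal (l1 (t - y)) \<partial>K t \<partial>M)"
proof -
  define \<Phi> where "\<Phi> t = (\<integral>\<^sup>+y. ennreal (l1 (t - y)) \<partial>K t)" for t
  have Ks: "K \<in> borel \<rightarrow>\<^sub>M subprob_algebra borel"
    using measurable_prob_algebraD[OF K] .
  have \<Phi>: "\<Phi> \<in> borel_measurable borel"
    unfolding \<Phi>_def by (rule nn_integral_measurable_subprob_algebra2[OF _ Ks]) measurable
  have "(\<integral>\<^sup>+y. ennreal (l1 (s - y)) \<partial>(M \<bind> K)) = (\<integral>\<^sup>+t. \<integral>\<^sup>+y. ennreal (l1 (s - y)) \<partial>K t \<partial>M)"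
    using Ks measurable_cong_sets[OF M refl] by (intro nn_integral_bind) auto
  also have "\<dots> \<le> (\<integral>\<^sup>+t. ennreal (l1 (s - t)) + \<Phi> t \<partial>M)"
  proof (rule nn_integral_mono)
    fix t
    have "(\<integral>\<^sup>+y. ennreal (l1 (s - y)) \<partial>K t) \<le> (\<integral>\<^sup>+y. ennreal (l1 (s - t)) + ennreal (l1 (t - y)) \<partial>K t)"
      using l1_diff_triangle[of s _ t]
      by (intro nn_integral_mono) (simp add: l1_nonneg flip: ennreal_plus)
    also have "\<dots> = ennreal (l1 (s - t)) + \<Phi> t"
      unfolding \<Phi>_def using prob_kernel_prob_space[OF K]
      by (rule nn_integral_const_add_prob) (simp add: measurable_cong_sets[OF prob_kernel_sets[OF K] refl])
    finally show "(\<integral>\<^sup>+y. ennreal (l1 (s - y)) \<partial>K t) \<le> ennreal (l1 (s - t)) + \<Phi> t" .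
  qed
  also have "\<dots> = (\<integral>\<^sup>+t. ennreal (l1 (s - t)) \<partial>M) + (\<integral>\<^sup>+t. \<Phi> t \<partial>M)"
    using \<Phi> by (intro nn_integral_add) (simp_all add: measurable_cong_sets[OF M refl])
  finally show ?thesis
    unfolding \<Phi>_def .
qed

lemma bind_noise_rcd_kernel_eq:
  fixes r q \<rho> :: "(real^'k) measure"
  assumes r: "prob_space r" "sets r = sets borel"
    and rho: "prob_space \<rho>" "sets \<rho> = sets borel"
    and \<gamma>: "\<gamma> \<in> couplings (r \<bind> noise_kernel \<rho>) q"
    and K: "rcd_first \<gamma> (r \<bind> noise_kernel \<rho>) K"
  shows "r \<bind> (\<lambda>s. noise_kernel \<rho> s \<bind> K) = q"
proof -
  let ?p = "r \<bind> noise_kernel \<rho>"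
  note N = noise_kernel_prob_algebra[OF rho]
  have Kp: "K \<in> borel \<rightarrow>\<^sub>M prob_algebra borel"
    using K unfolding rcd_first_def by auto
  note p = prob_space_bind_prob_kernel[OF r N]
  have "\<gamma> = graph_coupling ?p K"
    using \<gamma> by (intro rcd_first_eq_graph_coupling[OF K p]) (simp add: couplings_def)
  then have "?p \<bind> K = q"
    using graph_coupling_couplings[OF p Kp] \<gamma> by (simp add: couplings_def)
  moreover have "?p \<bind> K = r \<bind> (\<lambda>s. noise_kernel \<rho> s \<bind> K)"
    using measurable_prob_algebraD[OF N] measurable_prob_algebraD[OF Kp] measurable_cong_sets[OF r(2) refl]
    by (intro bind_assoc) auto
  ultimately show ?thesis
    by simp
qed

lemma noisy_kernel_cost_le:
  fixes r q \<rho> :: "(real^'k) measure"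
  assumes r: "prob_space r" "sets r = sets borel"
    and rho: "prob_space \<rho>" "sets \<rho> = sets borel"
    and \<gamma>: "\<gamma> \<in> couplings (r \<bind> noise_kernel \<rho>) q"
    and \<gamma>_opt: "transport_cost \<gamma> = W1e (r \<bind> noise_kernel \<rho>) q"
    and K: "rcd_first \<gamma> (r \<bind> noise_kernel \<rho>) K"
  shows "(\<integral>\<^sup>+s. \<integral>\<^sup>+y. ennreal (l1 (s - y)) \<partial>(noise_kernel \<rho> s \<bind> K) \<partial>r)
           \<le> W1e r q + 2 * (\<integral>\<^sup>+n. ennreal (l1 n) \<partial>\<rho>)"
proof -
  let ?p = "r \<bind> noise_kernel \<rho>"
  define EN where "EN = (\<integral>\<^sup>+n. ennreal (l1 n) \<partial>\<rho>)"
  define \<Phi> where "\<Phi> t = (\<integral>\<^sup>+y. ennreal (l1 (t - y)) \<partial>K t)" for t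
  note N = noise_kernel_prob_algebra[OF rho]
  have Kp: "K \<in> borel \<rightarrow>\<^sub>M prob_algebra borel"
    using K unfolding rcd_first_def by auto
  note p = prob_space_bind_prob_kernel[OF r N]
  have \<Phi>: "\<Phi> \<in> borel_measurable borel"
    unfolding \<Phi>_def by (rule nn_integral_measurable_subprob_algebra2[OF _ measurable_prob_algebraD[OF Kp]]) measurable
  have Nr: "noise_kernel \<rho> \<in> r \<rightarrow>\<^sub>M subprob_algebra borel"
    using measurable_prob_algebraD[OF N] measurable_cong_sets[OF r(2) refl] by blast
  have noise_dist: "(\<integral>\<^sup>+t. ennreal (l1 (s - t)) \<partial>noise_kernel \<rho> s) = EN" for s
    unfolding EN_def by (subst nn_integral_noise_kernel[OF rho(2)]) (simp_all add: l1_def)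
  have "(\<integral>\<^sup>+s. \<integral>\<^sup>+y. ennreal (l1 (s - y)) \<partial>(noise_kernel \<rho> s \<bind> K) \<partial>r)
      \<le> (\<integral>\<^sup>+s. EN + (\<integral>\<^sup>+t. \<Phi> t \<partial>noise_kernel \<rho> s) \<partial>r)"
  proof (rule nn_integral_mono)
    fix s
    show "(\<integral>\<^sup>+y. ennreal (l1 (s - y)) \<partial>(noise_kernel \<rho> s \<bind> K)) \<le> EN + (\<integral>\<^sup>+t. \<Phi> t \<partial>noise_kernel \<rho> s)"
      using nn_integral_l1_bind_le[OF prob_kernel_sets[OF N, of s] Kp, of s] noise_dist[of s]
      by (simp add: \<Phi>_def)
  qed
  also have "\<dots> = EN + (\<integral>\<^sup>+t. \<Phi> t \<partial>?p)"
    using \<Phi> Nr by (simp add: nn_integral_const_add_prob[OF r(1)] nn_integral_bind[OF \<Phi> Nr]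
        nn_integral_measurable_subprob_algebra2 measurable_cong_sets[OF r(2) refl])
  also have "(\<integral>\<^sup>+t. \<Phi> t \<partial>?p) = transport_cost \<gamma>"
  proof -
    have "\<gamma> = graph_coupling ?p K"
      using \<gamma> by (intro rcd_first_eq_graph_coupling[OF K p]) (simp add: couplings_def)
    then show ?thesis
      unfolding \<Phi>_def using transport_cost_graph_coupling[OF p(2) Kp] by simp
  qed
  also have "\<dots> \<le> W1e r q + EN"
    unfolding \<gamma>_opt EN_def using W1e_bind_noise_le[OF rho] .
  finally show ?thesis
    by (simp add: EN_def mult_2 ac_simps add_left_mono)
qed

section \<open>Labels and scores\<close>

lemma Ycal_eq_range_axis: "Ycal = range (\<lambda>i. axis i (1::real))"
  unfolding Ycal_def by auto

lemma finite_Ycal: "finite (Ycal :: (real^'k) set)"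
  unfolding Ycal_eq_range_axis by simp

lemma Ycal_borel[measurable]: "(Ycal :: (real^'k) set) \<in> sets borel"
  by (rule borel_closed[OF finite_imp_closed[OF finite_Ycal]])

lemma inj_axis_1: "inj (\<lambda>i. axis i (1::real) :: real^'k)"
  by (auto intro!: injI simp: axis_eq_axis)

lemma prob_simplex_borel[measurable]: "(prob_simplex :: (real^'k) set) \<in> sets borel"
  unfolding prob_simplex_def by measurable

lemma prob_simplex_nth_bounds:
  assumes "s \<in> prob_simplex"
  shows "0 \<le> s $ i" "s $ i \<le> 1"
  using assms member_le_sum[of i UNIV "\<lambda>j. s $ j"] unfolding prob_simplex_def by auto

lemma l1_prob_simplex_minus_axis:
  assumes "s \<in> prob_simplex"
  shows "l1 (s - axis i 1) = 2 * (1 - s $ i)"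
proof -
  have "l1 (s - axis i 1) = (\<Sum>j\<in>UNIV. s $ j + (if j = i then 1 - 2 * s $ j else 0))"
    unfolding l1_def using prob_simplex_nth_bounds[OF assms]
    by (intro sum.cong) (auto simp: axis_def)
  also have "\<dots> = 1 + (1 - 2 * s $ i)"
    using assms by (simp add: sum.distrib prob_simplex_def)
  finally show ?thesis
    by simp
qed

text \<open>The probability that a label drawn from the score \<open>s\<close> differs from an independent label
  drawn from \<open>M\<close>.\<close>
definition mismatch_prob :: "real^'k \<Rightarrow> (real^'k) measure \<Rightarrow> real" where
  "mismatch_prob s M = (\<Sum>i\<in>UNIV. s $ i * (1 - measure M {axis i 1}))"

lemma sum_measure_axis_eq_1:
  assumes "prob_space M" "sets M = sets borel" "emeasure M Ycal = 1"
  shows "(\<Sum>i\<in>UNIV. measure M {axis i (1::real)} :: real) = 1"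
proof -
  interpret prob_space M by (rule assms(1))
  have "(\<Sum>i\<in>UNIV. measure M {axis i (1::real)}) = (\<Sum>y\<in>Ycal. measure M {y})"
    unfolding Ycal_eq_range_axis by (simp add: sum.reindex[OF inj_axis_1])
  also have "\<dots> = measure M Ycal"
    using assms(2) by (intro measure_eq_sum_singleton[symmetric] finite_Ycal) auto
  finally show ?thesis
    using assms by (simp add: emeasure_eq_measure)
qed

lemma nn_integral_l1_prob_simplex:
  fixes M :: "(real^'k) measure"
  assumes M: "prob_space M" "sets M = sets borel" "emeasure M Ycal = 1" and s: "s \<in> prob_simplex"
  shows "(\<integral>\<^sup>+y. ennreal (l1 (s - y)) \<partial>M) = ennreal (2 * mismatch_prob s M)"
proof -
  interpret prob_space M by (rule M(1))
  have ae: "AE y in M. y \<in> Ycal"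
    using M by (subst AE_in_set_eq_1) (simp_all add: emeasure_eq_measure)
  have coeff_nonneg: "0 \<le> 2 * (1 - s $ i) * measure M {axis i 1}" for i
    using prob_simplex_nth_bounds[OF s, of i] by simp
  have "(\<integral>\<^sup>+y. ennreal (l1 (s - y)) \<partial>M) = (\<integral>\<^sup>+y. ennreal (l1 (s - y)) * indicator Ycal y \<partial>M)"
    by (rule nn_integral_cong_AE) (use ae in \<open>auto simp: indicator_def\<close>)
  also have "\<dots> = (\<Sum>y\<in>Ycal. ennreal (l1 (s - y)) * emeasure M {y})"
    using M(2) by (intro nn_integral_indicator_finite finite_Ycal) auto
  also have "\<dots> = (\<Sum>i\<in>UNIV. ennreal (2 * (1 - s $ i) * measure M {axis i 1}))"
    unfolding Ycal_eq_range_axis using prob_simplex_nth_bounds[OF s]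
    by (simp add: sum.reindex[OF inj_axis_1] l1_prob_simplex_minus_axis[OF s]
        emeasure_eq_measure ennreal_mult)
  also have "\<dots> = ennreal (\<Sum>i\<in>UNIV. 2 * (1 - s $ i) * measure M {axis i 1})"
    using coeff_nonneg by (rule sum_ennreal)
  also have "(\<Sum>i\<in>UNIV. 2 * (1 - s $ i) * measure M {axis i 1})
      = 2 * ((\<Sum>i\<in>UNIV. measure M {axis i 1}) - (\<Sum>i\<in>UNIV. s $ i * measure M {axis i 1}))"
    by (simp add: sum_distrib_left sum_subtractf algebra_simps)
  also have "\<dots> = 2 * mismatch_prob s M"
    using sum_measure_axis_eq_1[OF M] s
    by (simp add: mismatch_prob_def prob_simplex_def sum_subtractf algebra_simps)
  finally show ?thesis .
qed

lemma mismatch_prob_bounds: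
  assumes "s \<in> prob_simplex" "prob_space M"
  shows "0 \<le> mismatch_prob s M" "mismatch_prob s M \<le> 1"
proof -
  have "0 \<le> s $ i * (1 - measure M {axis i 1})" "s $ i * (1 - measure M {axis i 1}) \<le> s $ i" for i
    using prob_simplex_nth_bounds[OF assms(1), of i] prob_space.prob_le_1[OF assms(2)]
    by (auto intro: mult_left_le)
  then have "0 \<le> mismatch_prob s M" "mismatch_prob s M \<le> (\<Sum>i\<in>UNIV. s $ i)"
    unfolding mismatch_prob_def by (auto intro: sum_nonneg sum_mono)
  then show "0 \<le> mismatch_prob s M" "mismatch_prob s M \<le> 1"
    using assms(1) by (auto simp: prob_simplex_def)
qed

lemma ennreal_mismatch_prob:
  assumes "s \<in> prob_simplex" "prob_space M"
  shows "ennreal (mismatch_prob s M) = (\<Sum>i\<in>UNIV. ennreal (s $ i) * ennreal (1 - measure M {axis i 1}))"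
proof -
  have "0 \<le> s $ i" "0 \<le> 1 - measure M {axis i 1}" for i
    using prob_simplex_nth_bounds[OF assms(1)] prob_space.prob_le_1[OF assms(2)] by auto
  then show ?thesis
    unfolding mismatch_prob_def by (simp add: sum_ennreal[symmetric] ennreal_mult)
qed

lemma ennreal_measure_compl_label:
  fixes M :: "(real^'k) measure"
  assumes "prob_space M" "sets M = sets borel" "y \<in> Ycal"
  shows "ennreal (measure M (UNIV - {y})) = (\<Sum>i\<in>UNIV. indicator {axis i 1} y * ennreal (1 - measure M {axis i 1}))"
proof -
  obtain j where j: "y = axis j 1"
    using assms(3) unfolding Ycal_def by auto
  have "measure M (UNIV - {y}) = 1 - measure M {axis j 1}"
    using prob_space.prob_compl[OF assms(1), of "{y}"] sets_eq_imp_space_eq[OF assms(2)] assms(2)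
    by (simp add: j)
  then show ?thesis
    by (simp add: j indicator_def axis_eq_axis if_distrib[of "\<lambda>x. x * _"] cong: if_cong)
qed

lemma measurable_measure_kernel_singleton:
  fixes H :: "real^'k \<Rightarrow> (real^'k) measure"
  assumes "H \<in> borel \<rightarrow>\<^sub>M subprob_algebra borel"
  shows "(\<lambda>s. measure (H s) {c}) \<in> borel_measurable borel"
proof (rule measure_measurable_subprob_algebra2[OF _ assms])
  have "(SIGMA s:space (borel :: (real^'k) measure). {c}) = UNIV \<times> {c}"
    by auto
  then show "(SIGMA s:space (borel :: (real^'k) measure). {c}) \<in> sets (borel \<Otimes>\<^sub>M borel)"
    by simp
qed

lemma measurable_mismatch_prob:
  fixes H :: "real^'k \<Rightarrow> (real^'k) measure"
  assumes "H \<in> borel \<rightarrow>\<^sub>M subprob_algebra borel"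
  shows "(\<lambda>s. mismatch_prob s (H s)) \<in> borel_measurable borel"
  unfolding mismatch_prob_def
  by (intro borel_measurable_sum borel_measurable_times borel_measurable_diff
      measurable_measure_kernel_singleton[OF assms]) auto

lemma kernel_cost_eq_twice_mismatch:
  fixes r :: "(real^'k) measure"
  assumes r: "sets r = sets borel" and simplex: "AE s in r. s \<in> prob_simplex"
    and H: "H \<in> borel \<rightarrow>\<^sub>M prob_algebra borel" and labels: "AE s in r. emeasure (H s) Ycal = 1"
  shows "(\<integral>\<^sup>+s. \<integral>\<^sup>+y. ennreal (l1 (s - y)) \<partial>H s \<partial>r) = 2 * (\<integral>\<^sup>+s. ennreal (mismatch_prob s (H s)) \<partial>r)"
proof -
  have "(\<integral>\<^sup>+s. \<integral>\<^sup>+y. ennreal (l1 (s - y)) \<partial>H s \<partial>r) = (\<integral>\<^sup>+s. 2 * ennreal (mismatch_prob s (H s)) \<partial>r)"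
    using simplex labels
    by (intro nn_integral_cong_AE, eventually_elim)
      (simp add: nn_integral_l1_prob_simplex prob_kernel_prob_space[OF H] prob_kernel_sets[OF H] ennreal_mult')
  also have "\<dots> = 2 * (\<integral>\<^sup>+s. ennreal (mismatch_prob s (H s)) \<partial>r)"
    using measurable_mismatch_prob[OF measurable_prob_algebraD[OF H]]
    by (intro nn_integral_cmult) (simp add: measurable_cong_sets[OF r refl])
  finally show ?thesis .
qed

lemma emeasure_density_nth:
  fixes r :: "(real^'k) measure"
  assumes r: "prob_space r" "sets r = sets borel" and simplex: "AE s in r. s \<in> prob_simplex"
    and c: "0 \<le> c" and B[measurable]: "B \<in> sets borel"
  shows "emeasure (density r (\<lambda>s. ennreal (c * s $ i))) B = ennreal (c * (LINT s:B|r. s $ i))"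
proof -
  interpret prob_space r
    by (rule r(1))
  have bounds: "AE s in r. 0 \<le> c * (indicator B s *\<^sub>R s $ i) \<and> c * (indicator B s *\<^sub>R s $ i) \<le> c"
    using simplex
  proof eventually_elim
    case (elim s)
    then show ?case
      using c prob_simplex_nth_bounds[OF elim, of i] by (auto simp: indicator_def intro: mult_left_le)
  qed
  have int: "integrable r (\<lambda>s. c * (indicator B s *\<^sub>R s $ i))"
  proof (rule integrable_const_bound[where B=c])
    show "AE s in r. norm (c * (indicator B s *\<^sub>R s $ i)) \<le> c"
      using bounds by eventually_elim auto
    show "(\<lambda>s. c * (indicator B s *\<^sub>R s $ i)) \<in> borel_measurable r"
      by (subst measurable_cong_sets[OF r(2) refl]) measurable
  qed
  have "emeasure (density r (\<lambda>s. ennreal (c * s $ i))) B = (\<integral>\<^sup>+s. ennreal (c * s $ i) * indicator B s \<partial>r)"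
    by (rule emeasure_density) (simp_all add: measurable_cong_sets[OF r(2) refl] r(2))
  also have "\<dots> = (\<integral>\<^sup>+s. ennreal (c * (indicator B s *\<^sub>R s $ i)) \<partial>r)"
    by (rule nn_integral_cong) (simp add: indicator_def)
  also have "\<dots> = ennreal (c * (LINT s:B|r. s $ i))"
    using bounds by (subst nn_integral_eq_integral[OF int]) (auto elim: AE_mp simp: set_lebesgue_integral_def)
  finally show ?thesis .
qed

section \<open>Calibrated classification problems\<close>

context
  fixes m :: nat and \<mu> :: "('x::polish_space \<times> (real^'k) \<times> nat) measure"
  assumes mu: "classification_problem m \<mu>"
begin

lemma classification_problem_prob_space: "prob_space \<mu>"
  using mu unfolding classification_problem_def by auto

lemma classification_problem_sets: "sets \<mu> = sets (borel \<Otimes>\<^sub>M (borel \<Otimes>\<^sub>M count_space UNIV))"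
  using mu unfolding classification_problem_def by auto

lemma measurable_label: "(\<lambda>z. fst (snd z)) \<in> \<mu> \<rightarrow>\<^sub>M borel"
  by (subst measurable_cong_sets[OF classification_problem_sets refl]) measurable

lemma measurable_score:
  assumes "det_predictor f"
  shows "(\<lambda>z. f (fst z) a) \<in> \<mu> \<rightarrow>\<^sub>M borel"
proof -
  have [measurable]: "(\<lambda>x. f x a) \<in> borel_measurable borel"
    using assms unfolding det_predictor_def by auto
  show ?thesis
    by (subst measurable_cong_sets[OF classification_problem_sets refl]) measurable
qed

lemma group_sets: "{z \<in> space \<mu>. P (snd (snd z))} \<in> sets \<mu>"
proof -
  have "(\<lambda>z. snd (snd z)) \<in> \<mu> \<rightarrow>\<^sub>M count_space UNIV"
    by (subst measurable_cong_sets[OF classification_problem_sets refl]) measurable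
  from measurable_sets[OF this, of "{n. P n}"] show ?thesis
    by (simp add: vimage_def Int_def conj_commute)
qed

lemma label_group_sets: "{z \<in> space \<mu>. fst (snd z) = y \<and> snd (snd z) = a} \<in> sets \<mu>"
proof -
  have "{z \<in> space \<mu>. fst (snd z) = y} \<in> sets \<mu>"
    using measurable_sets[OF measurable_label, of "{y}"] by (simp add: vimage_def Int_def conj_commute)
  then show ?thesis
    using group_sets[of "\<lambda>n. n = a"] by (auto simp: Collect_conj_eq[symmetric] Int_def)
qed

lemma borel_measurable_indicator_group:
  "(indicator {z. snd (snd z) = a} :: _ \<Rightarrow> 'b::{t1_space, zero_neq_one}) \<in> borel_measurable \<mu>"
  using group_sets[of "\<lambda>n. n = a"] by (subst borel_measurable_indicator_iff) (simp add: Int_def conj_commute)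

lemma nn_integral_indicator_group:
  "(\<integral>\<^sup>+z. indicator {z. snd (snd z) = a} z \<partial>\<mu>) = ennreal (probA \<mu> a)"
proof -
  interpret prob_space \<mu> by (rule classification_problem_prob_space)
  have "(\<integral>\<^sup>+z. indicator {z. snd (snd z) = a} z \<partial>\<mu>) = (\<integral>\<^sup>+z. indicator {z \<in> space \<mu>. snd (snd z) = a} z \<partial>\<mu>)"
    by (rule nn_integral_cong) (auto simp: indicator_def)
  then show ?thesis
    using group_sets[of "\<lambda>n. n = a"] by (simp add: probA_def emeasure_eq_measure)
qed

lemma probA_pos: "a \<in> {1..m} \<Longrightarrow> 0 < probA \<mu> a"
  using mu unfolding classification_problem_def probA_def by auto

lemma nn_integral_pushf:
  assumes f: "det_predictor f" and \<phi>: "\<phi> \<in> borel_measurable (borel :: (real^'k) measure)"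
  shows "(\<integral>\<^sup>+s. \<phi> s \<partial>pushf \<mu> f a)
           = (1 / ennreal (probA \<mu> a)) * (\<integral>\<^sup>+z. indicator {z. snd (snd z) = a} z * \<phi> (f (fst z) a) \<partial>\<mu>)"
proof -
  have fm[measurable]: "(\<lambda>x. f x a) \<in> borel_measurable borel"
    using f unfolding det_predictor_def by auto
  have \<phi>f[measurable]: "(\<lambda>x. \<phi> (f x a)) \<in> borel_measurable borel"
    using measurable_compose[OF fm \<phi>] by simp
  note sm = classification_problem_sets
  define D where "D = density \<mu> (indicator {z. snd (snd z) = a})"
  have sD: "sets D = sets (borel \<Otimes>\<^sub>M (borel \<Otimes>\<^sub>M count_space UNIV))"
    using sm by (simp add: D_def)
  have "(\<integral>\<^sup>+s. \<phi> s \<partial>pushf \<mu> f a) = (\<integral>\<^sup>+x. \<phi> (f x a) \<partial>muX \<mu> a)"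
    unfolding pushf_def using \<phi>
    by (subst nn_integral_distr) (simp_all add: muX_def measurable_cong_sets[OF sets_scale_measure refl])
  also have "\<dots> = (1 / ennreal (probA \<mu> a)) * (\<integral>\<^sup>+x. \<phi> (f x a) \<partial>distr D borel fst)"
    unfolding muX_def D_def by (rule nn_integral_scale_measure) simp
  also have "(\<integral>\<^sup>+x. \<phi> (f x a) \<partial>distr D borel fst) = (\<integral>\<^sup>+z. \<phi> (f (fst z) a) \<partial>D)"
    by (subst nn_integral_distr) (simp_all add: measurable_cong_sets[OF sD refl])
  also have "\<dots> = (\<integral>\<^sup>+z. indicator {z. snd (snd z) = a} z * \<phi> (f (fst z) a) \<partial>\<mu>)"
    unfolding D_def using borel_measurable_indicator_group
    by (subst nn_integral_density) (simp_all add: measurable_cong_sets[OF sm refl])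
  finally show ?thesis .
qed

lemma prob_space_pushf:
  assumes "det_predictor f" "a \<in> {1..m}"
  shows "prob_space (pushf \<mu> f a)"
proof (rule prob_spaceI)
  have "emeasure (pushf \<mu> f a) (space (pushf \<mu> f a))
      = (1 / ennreal (probA \<mu> a)) * (\<integral>\<^sup>+z. indicator {z. snd (snd z) = a} z \<partial>\<mu>)"
    using nn_integral_pushf[OF assms(1), of "\<lambda>_. 1" a] by simp
  then show "emeasure (pushf \<mu> f a) (space (pushf \<mu> f a)) = 1"
    using probA_pos[OF assms(2)] by (simp add: nn_integral_indicator_group ennreal_divide_times)
qed

end


lemma sets_pushf[simp]: "sets (pushf \<mu> f a) = sets borel"
  by (simp add: pushf_def)

lemma AE_pushf_prob_simplex:
  assumes "det_predictor f"
  shows "AE s in pushf \<mu> f a. s \<in> prob_simplex"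
proof -
  have [measurable]: "(\<lambda>x. f x a) \<in> borel_measurable borel"
    using assms unfolding det_predictor_def by auto
  show ?thesis
    unfolding pushf_def using assms unfolding det_predictor_def
    by (subst AE_distr_iff) (simp_all add: muX_def measurable_cong_sets[OF sets_scale_measure refl])
qed

lemma calibrated_distr_eq_density:
  fixes \<mu> :: "('x::polish_space \<times> (real^'k) \<times> nat) measure"
    and i :: 'k
  assumes mu: "classification_problem m \<mu>" and f: "det_predictor f" and cal: "calibrated m \<mu> f"
    and a: "a \<in> {1..m}"
  defines "S \<equiv> {z \<in> space \<mu>. fst (snd z) = axis i 1 \<and> snd (snd z) = a}"
  shows "distr (density \<mu> (indicator S)) borel (\<lambda>z. f (fst z) a)
           = density (pushf \<mu> f a) (\<lambda>s. ennreal (probA \<mu> a * s $ i))"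
    (is "?lhs = ?rhs")
proof (rule measure_eqI)
  interpret \<mu>: prob_space \<mu>
    by (rule classification_problem_prob_space[OF mu])
  let ?r = "pushf \<mu> f a" and ?P = "probA \<mu> a" and ?g = "\<lambda>z. f (fst z) a"
  show "sets ?lhs = sets ?rhs"
    by simp
  fix B assume "B \<in> sets ?lhs"
  then have B[measurable]: "B \<in> sets borel"
    by simp
  note g = measurable_score[OF mu f]
  have S: "S \<in> sets \<mu>"
    unfolding S_def by (rule label_group_sets[OF mu])
  have gB: "?g -` B \<inter> space \<mu> \<in> sets \<mu>"
    by (rule measurable_sets[OF g B])
  have "emeasure ?lhs B = emeasure (density \<mu> (indicator S)) (?g -` B \<inter> space \<mu>)"
    using g by (subst emeasure_distr) simp_all
  also have "\<dots> = emeasure \<mu> (S \<inter> (?g -` B \<inter> space \<mu>))"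
    using S gB by (simp add: emeasure_density nn_integral_indicator indicator_inter_arith[symmetric])
  also have "S \<inter> (?g -` B \<inter> space \<mu>) = {z \<in> space \<mu>. fst (snd z) = axis i 1 \<and> ?g z \<in> B \<and> snd (snd z) = a}"
    by (auto simp: S_def)
  also have "emeasure \<mu> \<dots> = ennreal (?P * (LINT s:B|?r. s $ i))"
    using cal a B unfolding calibrated_def by (simp add: \<mu>.emeasure_eq_measure)
  also have "\<dots> = emeasure ?rhs B"
    using prob_space_pushf[OF mu f a] AE_pushf_prob_simplex[OF f] probA_pos[OF mu a] B
    by (intro emeasure_density_nth[symmetric]) simp_all
  finally show "emeasure ?lhs B = emeasure ?rhs B" .
qed

lemma nn_integral_calibrated:
  fixes \<mu> :: "('x::polish_space \<times> (real^'k) \<times> nat) measure" and i :: 'k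
  assumes mu: "classification_problem m \<mu>" and f: "det_predictor f" and cal: "calibrated m \<mu> f"
    and a: "a \<in> {1..m}" and \<phi>: "\<phi> \<in> borel_measurable (borel :: (real^'k) measure)"
  shows "(\<integral>\<^sup>+z. indicator {z \<in> space \<mu>. fst (snd z) = axis i 1 \<and> snd (snd z) = a} z * \<phi> (f (fst z) a) \<partial>\<mu>)
       = ennreal (probA \<mu> a) * (\<integral>\<^sup>+s. ennreal (s $ i) * \<phi> s \<partial>pushf \<mu> f a)"
proof -
  let ?S = "{z \<in> space \<mu>. fst (snd z) = axis i 1 \<and> snd (snd z) = a}"
  note g = measurable_score[OF mu f]
  have "(\<integral>\<^sup>+z. indicator ?S z * \<phi> (f (fst z) a) \<partial>\<mu>) = (\<integral>\<^sup>+z. \<phi> (f (fst z) a) \<partial>density \<mu> (indicator ?S))"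
    using label_group_sets[OF mu] measurable_compose[OF g \<phi>] by (simp add: nn_integral_density)
  also have "\<dots> = (\<integral>\<^sup>+s. \<phi> s \<partial>distr (density \<mu> (indicator ?S)) borel (\<lambda>z. f (fst z) a))"
    using g \<phi> by (simp add: nn_integral_distr)
  also have "\<dots> = (\<integral>\<^sup>+s. ennreal (probA \<mu> a * s $ i) * \<phi> s \<partial>pushf \<mu> f a)"
    unfolding calibrated_distr_eq_density[OF mu f cal a]
    using \<phi> by (subst nn_integral_density) (simp_all add: measurable_cong_sets[OF sets_pushf refl])
  also have "\<dots> = ennreal (probA \<mu> a) * (\<integral>\<^sup>+s. ennreal (s $ i) * \<phi> s \<partial>pushf \<mu> f a)"
    using probA_pos[OF mu a] \<phi>
    by (subst nn_integral_cmult[symmetric])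
      (simp_all add: measurable_cong_sets[OF sets_pushf refl] ennreal_mult' mult.assoc)
  finally show ?thesis .
qed

lemma measurable_measure_kernel_compl:
  fixes H :: "real^'k \<Rightarrow> (real^'k) measure"
  assumes H: "H \<in> borel \<rightarrow>\<^sub>M subprob_algebra borel"
  shows "(\<lambda>w. measure (H (fst w)) (UNIV - {snd w})) \<in> borel_measurable (borel \<Otimes>\<^sub>M borel)"
proof (rule measure_measurable_subprob_algebra2)
  let ?M = "((borel :: (real^'k) measure) \<Otimes>\<^sub>M (borel :: (real^'k) measure)) \<Otimes>\<^sub>M (borel :: (real^'k) measure)"
  have "{p \<in> space ?M. snd (fst p) = snd p} \<in> sets ?M"
    by measurable
  moreover have "(SIGMA w:space (borel \<Otimes>\<^sub>M borel). UNIV - {snd w}) = space ?M - {p \<in> space ?M. snd (fst p) = snd p}"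
    by (auto simp: space_pair_measure)
  ultimately show "(SIGMA w:space (borel \<Otimes>\<^sub>M borel). UNIV - {snd w}) \<in> sets ?M"
    by auto
  show "(\<lambda>w. H (fst w)) \<in> (borel \<Otimes>\<^sub>M borel) \<rightarrow>\<^sub>M subprob_algebra borel"
    using H by measurable
qed

lemma nn_integral_group_error:
  fixes \<mu> :: "('x::polish_space \<times> (real^'k) \<times> nat) measure" and H :: "real^'k \<Rightarrow> (real^'k) measure"
  assumes mu: "classification_problem m \<mu>" and f: "det_predictor f" and cal: "calibrated m \<mu> f"
    and a: "a \<in> {1..m}" and H: "H \<in> borel \<rightarrow>\<^sub>M prob_algebra borel"
  shows "(\<integral>\<^sup>+z. ennreal (indicator {z. snd (snd z) = a} z * measure (H (f (fst z) a)) (UNIV - {fst (snd z)})) \<partial>\<mu>)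
       = ennreal (probA \<mu> a) * (\<integral>\<^sup>+s. ennreal (mismatch_prob s (H s)) \<partial>pushf \<mu> f a)"
proof -
  define e where "e i s = measure (H s) {axis i (1::real)}" for i s
  define S where "S i = {z \<in> space \<mu>. fst (snd z) = axis i 1 \<and> snd (snd z) = a}" for i
  have e_measurable[measurable]: "e i \<in> borel_measurable borel" for i
    unfolding e_def by (rule measurable_measure_kernel_singleton[OF measurable_prob_algebraD[OF H]])
  note g = measurable_score[OF mu f]
  have "(\<integral>\<^sup>+z. ennreal (indicator {z. snd (snd z) = a} z * measure (H (f (fst z) a)) (UNIV - {fst (snd z)})) \<partial>\<mu>)
      = (\<integral>\<^sup>+z. (\<Sum>i\<in>UNIV. indicator (S i) z * ennreal (1 - e i (f (fst z) a))) \<partial>\<mu>)"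
  proof (rule nn_integral_cong_AE)
    have "AE z in \<mu>. fst (snd z) \<in> Ycal"
      using mu unfolding classification_problem_def by auto
    then show "AE z in \<mu>. ennreal (indicator {z. snd (snd z) = a} z * measure (H (f (fst z) a)) (UNIV - {fst (snd z)}))
        = (\<Sum>i\<in>UNIV. indicator (S i) z * ennreal (1 - e i (f (fst z) a)))"
      using AE_space
    proof eventually_elim
      case (elim z)
      have "(indicator (S i) z :: ennreal) = indicator {z. snd (snd z) = a} z * indicator {axis i 1} (fst (snd z))" for i
        using elim(2) by (auto simp: S_def indicator_def)
      then show ?case
        using ennreal_measure_compl_label[OF prob_kernel_prob_space[OF H] prob_kernel_sets[OF H] elim(1)]
        by (simp add: e_def indicator_def sum_distrib_left)
    qed
  qed
  also have "\<dots> = (\<Sum>i\<in>UNIV. \<integral>\<^sup>+z. indicator (S i) z * ennreal (1 - e i (f (fst z) a)) \<partial>\<mu>)"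
    using label_group_sets[OF mu] g by (intro nn_integral_sum) (simp_all add: S_def)
  also have "\<dots> = (\<Sum>i\<in>UNIV. ennreal (probA \<mu> a) * (\<integral>\<^sup>+s. ennreal (s $ i) * ennreal (1 - e i s) \<partial>pushf \<mu> f a))"
    unfolding S_def by (intro sum.cong refl nn_integral_calibrated[OF mu f cal a]) measurable
  also have "\<dots> = ennreal (probA \<mu> a) * (\<integral>\<^sup>+s. (\<Sum>i\<in>UNIV. ennreal (s $ i) * ennreal (1 - e i s)) \<partial>pushf \<mu> f a)"
    by (simp add: nn_integral_sum measurable_cong_sets[OF sets_pushf refl] sum_distrib_left)
  also have "(\<integral>\<^sup>+s. (\<Sum>i\<in>UNIV. ennreal (s $ i) * ennreal (1 - e i s)) \<partial>pushf \<mu> f a)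
      = (\<integral>\<^sup>+s. ennreal (mismatch_prob s (H s)) \<partial>pushf \<mu> f a)"
    using AE_pushf_prob_simplex[OF f]
    by (intro nn_integral_cong_AE, eventually_elim) (simp add: ennreal_mismatch_prob prob_kernel_prob_space[OF H] e_def)
  finally show ?thesis .
qed

lemma Err_prob_kernel_eq:
  fixes \<mu> :: "('x::polish_space \<times> (real^'k) \<times> nat) measure" and H :: "real^'k \<Rightarrow> (real^'k) measure"
  assumes mu: "classification_problem m \<mu>" and f: "det_predictor f" and cal: "calibrated m \<mu> f"
    and a: "a \<in> {1..m}" and H: "H \<in> borel \<rightarrow>\<^sub>M prob_algebra borel"
  shows "Err \<mu> (\<lambda>x a. H (f x a)) a = enn2real (\<integral>\<^sup>+s. ennreal (mismatch_prob s (H s)) \<partial>pushf \<mu> f a)"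
proof -
  let ?G = "\<lambda>z. indicator {z. snd (snd z) = a} z * measure (H (f (fst z) a)) (UNIV - {fst (snd z)})"
  have "(\<lambda>z. measure (H (fst (f (fst z) a, fst (snd z)))) (UNIV - {snd (f (fst z) a, fst (snd z))}))
      \<in> borel_measurable \<mu>"
    using measurable_compose[OF measurable_Pair[OF measurable_score[OF mu f] measurable_label[OF mu]]
        measurable_measure_kernel_compl[OF measurable_prob_algebraD[OF H]]] .
  then have "?G \<in> borel_measurable \<mu>"
    by (intro borel_measurable_times borel_measurable_indicator_group[OF mu]) simp
  then have "(\<integral>z. ?G z \<partial>\<mu>) = enn2real (\<integral>\<^sup>+z. ennreal (?G z) \<partial>\<mu>)"
    by (rule integral_eq_nn_integral) simp
  then show ?thesis
    using nn_integral_group_error[OF mu f cal a H] probA_pos[OF mu a]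
    by (simp add: Err_def enn2real_mult)
qed

section \<open>The error of the randomized predictor\<close>

lemma enn2real_half_gap_bounds:
  fixes W X :: ennreal
  assumes lower: "W \<le> 2 * X" and upper: "2 * X \<le> W + 2 * ennreal e" and "X < \<infinity>" "0 \<le> e"
  shows "0 \<le> enn2real X - (1/2) * enn2real W" "enn2real X - (1/2) * enn2real W \<le> e"
proof -
  obtain x where x: "X = ennreal x" "0 \<le> x"
    using \<open>X < \<infinity>\<close> by (cases X) auto
  then have "W < \<infinity>"
    using lower by (simp add: le_less_trans ennreal_mult_less_top)
  then obtain w where w: "W = ennreal w" "0 \<le> w"
    by (cases W) auto
  have "2 * X = ennreal (2 * x)" "W + 2 * ennreal e = ennreal (w + 2 * e)"
    using x w \<open>0 \<le> e\<close> by (simp_all add: ennreal_mult ennreal_plus)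
  then have "w \<le> 2 * x" "2 * x \<le> w + 2 * e"
    using lower upper x w \<open>0 \<le> e\<close> by (simp_all del: ennreal_plus add: ennreal_plus[symmetric])
  then show "0 \<le> enn2real X - (1/2) * enn2real W" "enn2real X - (1/2) * enn2real W \<le> e"
    using x w by simp_all
qed

lemma Err_denoised_bounds:
  fixes \<mu> :: "('x::polish_space \<times> (real^'k) \<times> nat) measure" and q \<rho> :: "(real^'k) measure"
  assumes mu: "classification_problem m \<mu>" and f: "det_predictor f" and cal: "calibrated m \<mu> f"
    and a: "a \<in> {1..m}" and q: "q \<in> Qk"
    and rho: "prob_space \<rho>" "sets \<rho> = sets borel" and rho_moment: "integrable \<rho> l1"
    and \<gamma>: "\<gamma> \<in> couplings (push_kernel (pushf \<mu> f a) (noise_kernel \<rho>)) q"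
    and \<gamma>_opt: "transport_cost \<gamma> = W1e (push_kernel (pushf \<mu> f a) (noise_kernel \<rho>)) q"
    and K: "rcd_first \<gamma> (push_kernel (pushf \<mu> f a) (noise_kernel \<rho>)) K"
  defines "E \<equiv> Err \<mu> (\<lambda>x a. push_kernel (push_kernel (return borel (f x a)) (noise_kernel \<rho>)) K) a"
  shows "0 \<le> E - (1/2) * W1 (pushf \<mu> f a) q" "E - (1/2) * W1 (pushf \<mu> f a) q \<le> (\<integral>n. l1 n \<partial>\<rho>)"
proof -
  let ?r = "pushf \<mu> f a"
  define H where "H s = noise_kernel \<rho> s \<bind> K" for s
  define X where "X = (\<integral>\<^sup>+s. ennreal (mismatch_prob s (H s)) \<partial>?r)"
  note r = prob_space_pushf[OF mu f a] sets_pushf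
  note N = noise_kernel_prob_algebra[OF rho(1,2)]
  have Kp: "K \<in> borel \<rightarrow>\<^sub>M prob_algebra borel"
    using K unfolding rcd_first_def by auto
  have H_kernel: "H \<in> borel \<rightarrow>\<^sub>M prob_algebra borel"
    unfolding H_def by (rule measurable_bind_prob_space[OF N Kp])
  have "E = enn2real X"
    using Err_prob_kernel_eq[OF mu f cal a H_kernel] bind_return[OF measurable_prob_algebraD[OF N]]
    by (simp add: E_def X_def H_def push_kernel_def)
  have rH: "?r \<bind> H = q"
    unfolding H_def using bind_noise_rcd_kernel_eq[OF r rho(1,2)] \<gamma> K by (simp add: push_kernel_def)
  have labels: "AE s in ?r. emeasure (H s) Ycal = 1"
    using q rH by (intro AE_kernel_emeasure_eq_1[OF r H_kernel]) (simp_all add: Qk_def)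
  have cost: "(\<integral>\<^sup>+s. \<integral>\<^sup>+y. ennreal (l1 (s - y)) \<partial>H s \<partial>?r) = 2 * X"
    unfolding X_def using AE_pushf_prob_simplex[OF f] H_kernel labels
    by (rule kernel_cost_eq_twice_mismatch[OF sets_pushf])
  have lower: "W1e ?r q \<le> 2 * X"
    using W1e_bind_le_kernel_cost[OF r H_kernel] rH cost by simp
  have upper: "2 * X \<le> W1e ?r q + 2 * ennreal (\<integral>n. l1 n \<partial>\<rho>)"
  proof -
    have "2 * X \<le> W1e ?r q + 2 * (\<integral>\<^sup>+n. ennreal (l1 n) \<partial>\<rho>)"
      using noisy_kernel_cost_le[OF r rho(1,2), of \<gamma> q K] \<gamma> \<gamma>_opt K cost
      by (simp add: H_def push_kernel_def)
    also have "(\<integral>\<^sup>+n. ennreal (l1 n) \<partial>\<rho>) = ennreal (\<integral>n. l1 n \<partial>\<rho>)"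
      using rho_moment by (rule nn_integral_eq_integral) (simp add: l1_nonneg)
    finally show ?thesis .
  qed
  have "X \<le> (\<integral>\<^sup>+s. 1 \<partial>?r)"
    unfolding X_def using AE_pushf_prob_simplex[OF f]
    by (intro nn_integral_mono_AE, eventually_elim)
      (simp add: mismatch_prob_bounds prob_kernel_prob_space[OF H_kernel])
  then have "X < \<infinity>"
    using prob_space.emeasure_space_1[OF r(1)] by (simp add: le_less_trans)
  then show "0 \<le> E - (1/2) * W1 ?r q" "E - (1/2) * W1 ?r q \<le> (\<integral>n. l1 n \<partial>\<rho>)"
    using enn2real_half_gap_bounds[OF lower upper] \<open>E = enn2real X\<close> by (simp_all add: W1_def l1_nonneg)
qed

theorem proposition4p3:
  fixes m :: nat
    and \<mu> :: "('x::polish_space \<times> (real^'k) \<times> nat) measure"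
    and f :: "'x \<Rightarrow> nat \<Rightarrow> real^'k"
    and qstar :: "(real^'k) measure"
    and \<rho> :: "(real^'k) measure"
    and \<gamma> :: "nat \<Rightarrow> ((real^'k) \<times> (real^'k)) measure"
    and \<kappa> :: "nat \<Rightarrow> real^'k \<Rightarrow> (real^'k) measure"
  assumes k2: "CARD('k) \<ge> 2"
    and mu: "classification_problem m \<mu>"
    and f: "det_predictor f"
    and cal: "calibrated m \<mu> f"
    and qstar: "qstar \<in> Qk"
    and qstar_min: "\<forall>q\<in>Qk. (\<Sum>a=1..m. W1 (pushf \<mu> f a) qstar) \<le> (\<Sum>a=1..m. W1 (pushf \<mu> f a) q)"
    and rho: "prob_space \<rho>" "sets \<rho> = sets borel" "absolutely_continuous lborel \<rho>"
    and rho_moment: "integrable \<rho> l1"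
    and gamma: "\<forall>a\<in>{1..m}.
        \<gamma> a \<in> couplings (push_kernel (pushf \<mu> f a) (noise_kernel \<rho>)) qstar \<and>
        transport_cost (\<gamma> a) = W1e (push_kernel (pushf \<mu> f a) (noise_kernel \<rho>)) qstar"
    and kappa: "\<forall>a\<in>{1..m}. rcd_first (\<gamma> a) (push_kernel (pushf \<mu> f a) (noise_kernel \<rho>)) (\<kappa> a)"
  shows "0 \<le> (\<Sum>a=1..m. Err \<mu> (\<lambda>x a. push_kernel (push_kernel (return borel (f x a)) (noise_kernel \<rho>)) (\<kappa> a)) a)
              - (1/2) * (\<Sum>a=1..m. W1 (pushf \<mu> f a) qstar)
       \<and> (\<Sum>a=1..m. Err \<mu> (\<lambda>x a. push_kernel (push_kernel (return borel (f x a)) (noise_kernel \<rho>)) (\<kappa> a)) a)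
              - (1/2) * (\<Sum>a=1..m. W1 (pushf \<mu> f a) qstar)
         \<le> real m * (\<integral>n. l1 n \<partial>\<rho>)"
proof -
  define gap where "gap a = Err \<mu> (\<lambda>x a'. push_kernel (push_kernel (return borel (f x a')) (noise_kernel \<rho>)) (\<kappa> a)) a
                             - (1/2) * W1 (pushf \<mu> f a) qstar" for a
  have gap_bounds: "0 \<le> gap a \<and> gap a \<le> (\<integral>n. l1 n \<partial>\<rho>)" if "a \<in> {1..m}" for a
    using Err_denoised_bounds[OF mu f cal that qstar rho(1,2) rho_moment] gamma kappa that
    unfolding gap_def by blast
  have "(\<Sum>a=1..m. Err \<mu> (\<lambda>x a. push_kernel (push_kernel (return borel (f x a)) (noise_kernel \<rho>)) (\<kappa> a)) a)
          - (1/2) * (\<Sum>a=1..m. W1 (pushf \<mu> f a) qstar) = (\<Sum>a=1..m. gap a)"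
    unfolding gap_def Err_def by (simp add: sum_subtractf sum_distrib_left)
  moreover have "0 \<le> (\<Sum>a=1..m. gap a)" "(\<Sum>a=1..m. gap a) \<le> real m * (\<integral>n. l1 n \<partial>\<rho>)"
    using gap_bounds sum_nonneg[of "{1..m}" gap] sum_mono[of "{1..m}" gap "\<lambda>_. \<integral>n. l1 n \<partial>\<rho>"] by auto
  ultimately show ?thesis
    by simp
qed

end
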